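(* Let $n\ge 2$ and let $\mathcal{G}\subseteq 2^{[n]}$ be an IU-family, i.e. $G\cap G'\neq\emptyset$ and $G\cup G'\neq[n]$ for all $G,G'\in\mathcal{G}$. Then $\beta(\mathcal{G})\le 2^{n-4}$.
   Context: $[n]=\{1,\dots,n\}$ and $2^{[n]}$ is the family of all subsets of $[n]$. For $\mathcal{F}\subseteq 2^{[n]}$ and distinct $i,j\in[n]$, let $\mathcal{F}(i,\bar{j})=\{F\setminus\{i\}: F\in\mathcal{F},\ F\cap\{i,j\}=\{i\}\}$. The sturdiness of $\mathcal{F}$ is $\beta(\mathcal{F})=\min_{1\le i\neq j\le n}|\mathcal{F}(i,\bar{j})|$. *)

theory Defs
  imports Complex_Main
begin

definition restr :: "nat set set \<Rightarrow> nat \<Rightarrow> nat \<Rightarrow> nat set set" where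
  "restr F i j = {A - {i} | A. A \<in> F \<and> A \<inter> {i, j} = {i}}"

definition sturdiness :: "nat \<Rightarrow> nat set set \<Rightarrow> nat" where
  "sturdiness n F = Min {card (restr F i j) | i j. i \<in> {1..n} \<and> j \<in> {1..n} \<and> i \<noteq> j}"

definition IU_family :: "nat \<Rightarrow> nat set set \<Rightarrow> bool" where
  "IU_family n G \<longleftrightarrow> G \<subseteq> Pow {1..n} \<and>
     (\<forall>A\<in>G. \<forall>B\<in>G. A \<inter> B \<noteq> {} \<and> A \<union> B \<noteq> {1..n})"

end

theory Submission
  imports Defs
begin

text \<open>Fix \<open>i \<noteq> j\<close>.  The families \<open>A = restr G i j\<close> and \<open>B = restr G j i\<close> (the paper's
  \<open>G(i,j)\<close> and \<open>G(j,i)\<close> with the second index barred) live on \<open>S = [n] - {i,j}\<close> and are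
  cross-intersecting and cross-noncovering.  Let \<open>U\<close> and \<open>D\<close> be the up-set and the down-set
  generated by \<open>A\<close>.  Then \<open>A \<subseteq> U \<inter> D\<close>, while the complements of the members of \<open>B\<close> avoid
  both \<open>U\<close> and \<open>D\<close>.  Kleitman's lemma \<open>N |U \<inter> D| \<le> |U| |D|\<close> (with \<open>N = 2^|S|\<close>), applied to
  \<open>U, D\<close> and to their complements, gives \<open>N\<^sup>2 |A| |B| \<le> |U| (N - |U|) |D| (N - |D|) \<le> N\<^sup>4 / 16\<close>,
  hence \<open>min |A| |B| \<le> N / 4 = 2^(n-4)\<close>.\<close>

definition up_closed :: "'a set \<Rightarrow> 'a set set \<Rightarrow> bool" where
  "up_closed S U \<longleftrightarrow> (\<forall>X\<in>U. \<forall>Y. X \<subseteq> Y \<and> Y \<subseteq> S \<longrightarrow> Y \<in> U)"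

definition down_closed :: "'a set set \<Rightarrow> bool" where
  "down_closed D \<longleftrightarrow> (\<forall>X\<in>D. \<forall>Y. Y \<subseteq> X \<longrightarrow> Y \<in> D)"

lemma card_split_by_element:
  assumes "finite S" "e \<notin> S" "F \<subseteq> Pow (insert e S)"
  shows "card F = card {Y \<in> F. e \<notin> Y} + card {Y. Y \<subseteq> S \<and> insert e Y \<in> F}"
proof -
  let ?F1 = "{Y. Y \<subseteq> S \<and> insert e Y \<in> F}"
  have split: "F = {Y \<in> F. e \<notin> Y} \<union> insert e ` ?F1"
  proof (intro equalityI subsetI)
    fix Y assume "Y \<in> F"
    then have "Y = insert e (Y - {e}) \<and> Y - {e} \<subseteq> S" if "e \<in> Y"
      using assms(3) that by auto
    then show "Y \<in> {Y \<in> F. e \<notin> Y} \<union> insert e ` ?F1"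
      using \<open>Y \<in> F\<close> by (metis (mono_tags, lifting) UnI1 UnI2 image_eqI mem_Collect_eq)
  qed auto
  have "finite F"
    using assms(1,3) finite_subset by blast
  moreover have "finite ?F1"
    using finite_subset[of ?F1 "Pow S"] assms(1) by auto
  moreover have "inj_on (insert e) ?F1"
    using assms(2) by (auto simp: inj_on_def)
  ultimately show ?thesis
    by (subst split, subst card_Un_disjoint) (auto simp: card_image)
qed

lemma two_term_chebyshev:
  fixes u0 u1 d0 d1 :: nat
  assumes "u0 \<le> u1" "d1 \<le> d0"
  shows "2 * (u0 * d0 + u1 * d1) \<le> (u0 + u1) * (d0 + d1)"
proof -
  obtain p q where "u1 = u0 + p" "d0 = d1 + q"
    using assms le_Suc_ex by blast
  then show ?thesis by (simp add: algebra_simps)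
qed

lemma kleitman:
  assumes "finite S" "U \<subseteq> Pow S" "D \<subseteq> Pow S" "up_closed S U" "down_closed D"
  shows "2 ^ card S * card (U \<inter> D) \<le> card U * card D"
  using assms
proof (induction S arbitrary: U D rule: finite_induct)
  case empty
  then have "U \<subseteq> {{}}" "D \<subseteq> {{}}" by auto
  then show ?case
    by (auto simp: subset_singleton_iff)
next
  case (insert e S)
  define lo :: "'a set set \<Rightarrow> 'a set set" where "lo F = {Y \<in> F. e \<notin> Y}" for F
  define hi :: "'a set set \<Rightarrow> 'a set set" where "hi F = {Y. Y \<subseteq> S \<and> insert e Y \<in> F}" for F
  have card_lo_hi: "card F = card (lo F) + card (hi F)" if "F \<subseteq> Pow (insert e S)" for F
    unfolding lo_def hi_def using card_split_by_element[OF insert(1,2) that] .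
  have lo_Pow: "lo U \<subseteq> Pow S" "lo D \<subseteq> Pow S"
    using insert.prems(1,2) by (auto simp: lo_def)
  have hi_Pow: "hi U \<subseteq> Pow S" "hi D \<subseteq> Pow S"
    by (auto simp: hi_def)
  have lo_U: "up_closed S (lo U)"
    using insert.prems(3) insert.hyps(2) unfolding up_closed_def lo_def
    by (metis (no_types, lifting) mem_Collect_eq subsetD subset_insertI2)
  have hi_U: "up_closed S (hi U)"
    using insert.prems(3) unfolding up_closed_def hi_def
    by (metis (no_types, lifting) insert_mono mem_Collect_eq)
  have lo_D: "down_closed (lo D)"
    using insert.prems(4) unfolding down_closed_def lo_def by blast
  have hi_D: "down_closed (hi D)"
    using insert.prems(4) unfolding down_closed_def hi_def
    by (metis (no_types, lifting) insert_mono mem_Collect_eq subset_trans)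
  have fin: "finite (Pow S)"
    using insert.hyps(1) by simp
  have "lo U \<subseteq> hi U"
  proof
    fix X assume "X \<in> lo U"
    then have "X \<in> U" "X \<subseteq> S"
      using insert.prems(1) by (auto simp: lo_def)
    then show "X \<in> hi U"
      using insert.prems(3) unfolding up_closed_def hi_def
      by (metis (no_types, lifting) insert_mono mem_Collect_eq subset_insertI)
  qed
  then have lo_hi_U: "card (lo U) \<le> card (hi U)"
    using card_mono[OF finite_subset[OF hi_Pow(1) fin]] by blast
  have "hi D \<subseteq> lo D"
    using insert.prems(4) insert.hyps(2) by (auto simp: down_closed_def lo_def hi_def)
  then have hi_lo_D: "card (hi D) \<le> card (lo D)"
    using card_mono[OF finite_subset[OF lo_Pow(2) fin]] by blast
  have "lo (U \<inter> D) = lo U \<inter> lo D" "hi (U \<inter> D) = hi U \<inter> hi D"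
    by (auto simp: lo_def hi_def)
  then have "card (U \<inter> D) = card (lo U \<inter> lo D) + card (hi U \<inter> hi D)"
    using card_lo_hi[of "U \<inter> D"] insert.prems(1) by auto
  then have "2 ^ card (insert e S) * card (U \<inter> D)
      = 2 * (2 ^ card S * card (lo U \<inter> lo D) + 2 ^ card S * card (hi U \<inter> hi D))"
    using insert.hyps by (simp add: algebra_simps)
  also have "\<dots> \<le> 2 * (card (lo U) * card (lo D) + card (hi U) * card (hi D))"
    using insert.IH[OF lo_Pow lo_U lo_D] insert.IH[OF hi_Pow hi_U hi_D] by simp
  also have "\<dots> \<le> (card (lo U) + card (hi U)) * (card (lo D) + card (hi D))"
    using two_term_chebyshev[OF lo_hi_U hi_lo_D] by simp
  also have "\<dots> = card U * card D"
    using card_lo_hi insert.prems(1,2) by simp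
  finally show ?case .
qed

lemma four_mul_le_square_sum:
  fixes u v :: nat
  shows "4 * (u * v) \<le> (u + v)\<^sup>2"
proof -
  have "real (4 * (u * v)) \<le> real ((u + v)\<^sup>2)"
    using sum_squares_ge_zero[of "real u - real v" 0] by (simp add: power2_eq_square algebra_simps)
  then show ?thesis by linarith
qed

lemma four_min_le_of_bounds:
  fixes N a c u d :: nat
  assumes "N * a \<le> u * d" "N * c \<le> (N - u) * (N - d)" "u \<le> N" "d \<le> N" "0 < N"
  shows "4 * min a c \<le> N"
proof -
  have u: "4 * (u * (N - u)) \<le> N\<^sup>2" and d: "4 * (d * (N - d)) \<le> N\<^sup>2"
    using four_mul_le_square_sum[of u "N - u"] four_mul_le_square_sum[of d "N - d"] assms(3,4)
    by simp_all
  have "N\<^sup>2 * (16 * (a * c)) = 16 * ((N * a) * (N * c))"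
    by (simp add: power2_eq_square algebra_simps)
  also have "\<dots> \<le> 16 * ((u * d) * ((N - u) * (N - d)))"
    using mult_le_mono[OF assms(1,2)] by simp
  also have "\<dots> = (4 * (u * (N - u))) * (4 * (d * (N - d)))"
    by (simp add: algebra_simps)
  also have "\<dots> \<le> N\<^sup>2 * N\<^sup>2"
    using mult_le_mono[OF u d] .
  finally have "16 * (a * c) \<le> N\<^sup>2"
    by (rule mult_left_le_imp_le) (use assms(5) in simp)
  moreover have "(4 * min a c)\<^sup>2 \<le> 16 * (a * c)"
    using mult_le_mono[OF min.cobounded1 min.cobounded2, of a c] by (simp add: power2_eq_square)
  ultimately have "(4 * min a c)\<^sup>2 \<le> N\<^sup>2"
    by (rule le_trans[rotated])
  then show ?thesis
    by (rule power2_le_imp_le) simp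
qed

lemma min_card_cross_IU_le:
  assumes "finite S" "A \<subseteq> Pow S" "B \<subseteq> Pow S"
    and cross: "\<And>X Y. X \<in> A \<Longrightarrow> Y \<in> B \<Longrightarrow> X \<inter> Y \<noteq> {} \<and> X \<union> Y \<noteq> S"
  shows "4 * min (card A) (card B) \<le> 2 ^ card S"
proof -
  define U where "U = {Y. Y \<subseteq> S \<and> (\<exists>X\<in>A. X \<subseteq> Y)}"
  define D where "D = {Y. \<exists>X\<in>A. Y \<subseteq> X}"
  have finP: "finite (Pow S)"
    using assms(1) by simp
  have card_compl: "card (Pow S - F) = 2 ^ card S - card F" if "F \<subseteq> Pow S" for F
    using card_Diff_subset[OF finite_subset[OF that finP] that] assms(1) by (simp add: card_Pow)
  have card_le: "card F \<le> 2 ^ card S" if "F \<subseteq> Pow S" for F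
    using card_mono[OF finP that] assms(1) by (simp add: card_Pow)
  have U: "U \<subseteq> Pow S" "up_closed S U" "down_closed (Pow S - U)"
    by (auto simp: U_def up_closed_def down_closed_def) (meson subset_trans)
  have D: "D \<subseteq> Pow S" "down_closed D" "up_closed S (Pow S - D)"
    using assms(2) by (auto simp: D_def up_closed_def down_closed_def) (meson subset_trans)+
  have "A \<subseteq> U \<inter> D"
    using assms(2) by (auto simp: U_def D_def)
  then have "card A \<le> card (U \<inter> D)"
    using finite_subset[OF U(1) finP] by (simp add: card_mono)
  then have "2 ^ card S * card A \<le> 2 ^ card S * card (U \<inter> D)"
    by simp
  also have "\<dots> \<le> card U * card D"
    by (rule kleitman[OF assms(1) U(1) D(1) U(2) D(2)])
  finally have a: "2 ^ card S * card A \<le> card U * card D" .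
  have "(\<lambda>Y. S - Y) ` B \<subseteq> (Pow S - D) \<inter> (Pow S - U)"
  proof
    fix Z assume "Z \<in> (\<lambda>Y. S - Y) ` B"
    then obtain Y where Y: "Y \<in> B" "Z = S - Y"
      by blast
    have "Z \<notin> U"
      using cross[OF _ Y(1)] Y(2) by (auto simp: U_def)
    moreover have "Z \<notin> D"
    proof
      assume "Z \<in> D"
      then obtain X where X: "X \<in> A" "S - Y \<subseteq> X"
        using Y(2) by (auto simp: D_def)
      then have "X \<union> Y = S"
        using assms(2,3) Y(1) by auto
      then show False
        using cross[OF X(1) Y(1)] by blast
    qed
    ultimately show "Z \<in> (Pow S - D) \<inter> (Pow S - U)"
      using Y(2) by blast
  qed
  moreover have "inj_on (\<lambda>Y. S - Y) B"
    using assms(3) by (auto intro!: inj_onI)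
  ultimately have "card B \<le> card ((Pow S - D) \<inter> (Pow S - U))"
    using finP by (metis card_image card_mono finite_Int finite_Diff)
  then have "2 ^ card S * card B \<le> 2 ^ card S * card ((Pow S - D) \<inter> (Pow S - U))"
    by simp
  also have "\<dots> \<le> card (Pow S - D) * card (Pow S - U)"
    by (rule kleitman[OF assms(1) _ _ D(3) U(3)]) auto
  also have "\<dots> = (2 ^ card S - card U) * (2 ^ card S - card D)"
    using card_compl[OF U(1)] card_compl[OF D(1)] by simp
  finally have c: "2 ^ card S * card B \<le> (2 ^ card S - card U) * (2 ^ card S - card D)" .
  show ?thesis
    using four_min_le_of_bounds[OF a c card_le[OF U(1)] card_le[OF D(1)]] by simp
qed

lemma restr_subset_Pow:
  assumes "F \<subseteq> Pow V"
  shows "restr F i j \<subseteq> Pow (V - {i, j})"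
proof
  fix X assume "X \<in> restr F i j"
  then obtain Z where Z: "Z \<in> F" "Z \<inter> {i, j} = {i}" "X = Z - {i}"
    unfolding restr_def by blast
  then have "j \<notin> X"
    by blast
  then show "X \<in> Pow (V - {i, j})"
    using Z assms by blast
qed

lemma restr_cross_IU:
  assumes "IU_family n G" "i \<in> {1..n}" "j \<in> {1..n}" "i \<noteq> j"
    and "X \<in> restr G i j" "Y \<in> restr G j i"
  shows "X \<inter> Y \<noteq> {} \<and> X \<union> Y \<noteq> {1..n} - {i, j}"
proof -
  obtain Z W where ZW: "Z \<in> G" "W \<in> G" "Z \<inter> {i, j} = {i}" "W \<inter> {j, i} = {j}"
    and "X = Z - {i}" "Y = W - {j}"
    using assms(5,6) unfolding restr_def by blast
  then have Z: "Z = insert i X" "j \<notin> X" and W: "W = insert j Y" "i \<notin> Y"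
    using assms(4) by blast+
  have "Z \<inter> W \<noteq> {}" "Z \<union> W \<noteq> {1..n}"
    using assms(1) ZW(1,2) unfolding IU_family_def by blast+
  moreover have "Z \<inter> W = X \<inter> Y"
    using Z W assms(4) by blast
  moreover have "Z \<union> W = insert i (insert j (X \<union> Y))"
    using Z W by blast
  moreover have "insert i (insert j ({1..n} - {i, j})) = {1..n}"
    using assms(2,3) by blast
  ultimately show ?thesis
    by metis
qed

lemma sturdiness_le_card_restr:
  assumes "i \<in> {1..n}" "j \<in> {1..n}" "i \<noteq> j"
  shows "sturdiness n F \<le> card (restr F i j)"
proof -
  let ?M = "{card (restr F i j) | i j. i \<in> {1..n} \<and> j \<in> {1..n} \<and> i \<noteq> j}"
  have "?M \<subseteq> (\<lambda>(i, j). card (restr F i j)) ` ({1..n} \<times> {1..n})"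
    by auto
  then have "finite ?M"
    by (rule finite_subset) simp
  then show ?thesis
    unfolding sturdiness_def using assms by (intro Min_le) auto
qed

lemma restr_min_card_le:
  assumes "IU_family n G" "i \<in> {1..n}" "j \<in> {1..n}" "i \<noteq> j"
  shows "4 * min (card (restr G i j)) (card (restr G j i)) \<le> 2 ^ (n - 2)"
proof -
  have G: "G \<subseteq> Pow {1..n}"
    using assms(1) unfolding IU_family_def by blast
  have "restr G j i \<subseteq> Pow ({1..n} - {i, j})"
    using restr_subset_Pow[OF G, of j i] by (simp only: insert_commute)
  then have "4 * min (card (restr G i j)) (card (restr G j i)) \<le> 2 ^ card ({1..n} - {i, j})"
    using min_card_cross_IU_le[OF _ restr_subset_Pow[OF G] _ restr_cross_IU[OF assms]] by simp
  moreover have "card ({1..n} - {i, j}) = n - 2"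
    using assms(2-4) by (subst card_Diff_subset) auto
  ultimately show ?thesis
    by simp
qed

theorem theorem1p3:
  fixes n :: nat and G :: "nat set set"
  assumes "n \<ge> 2" and "IU_family n G"
  shows "real (sturdiness n G) \<le> 2 powr (real n - 4)"
proof -
  have "sturdiness n G \<le> min (card (restr G 1 2)) (card (restr G 2 1))"
    using sturdiness_le_card_restr[of 1 n 2 G] sturdiness_le_card_restr[of 2 n 1 G] assms(1)
    by simp
  moreover have "4 * min (card (restr G 1 2)) (card (restr G 2 1)) \<le> 2 ^ (n - 2)"
    using assms by (intro restr_min_card_le) auto
  ultimately have "4 * sturdiness n G \<le> 2 ^ (n - 2)"
    by (meson le_trans mult_le_mono2)
  then have "4 * real (sturdiness n G) \<le> 2 ^ (n - 2)"
    by (metis of_nat_le_iff of_nat_mult of_nat_numeral of_nat_power)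
  moreover have "2 powr (real n - 4) = 2 ^ (n - 2) / 4"
  proof -
    have "real n - 4 = real (n - 2) - 2"
      using assms(1) by simp
    then have "2 powr (real n - 4) = 2 powr real (n - 2) / 2 powr 2"
      by (simp only: powr_diff)
    also have "\<dots> = 2 ^ (n - 2) / 4"
      by (simp add: powr_realpow)
    finally show ?thesis .
  qed
  ultimately show ?thesis
    by simp
qed

end
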